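(* Let $K>0$, $\mu>0$, $h>0$, and $r=h/H\in(0,1)$. Consider the homogeneous controlled patch problem (context) and suppose that, for some $k>0$, $T(x,t)=e^{-Kk^2t}\phi(x)$ is a solution with $\phi\not\equiv0$ even of the form $$\phi(x)=\begin{cases}A\cos kx, & |x|<h/4,\\ C+D\cos[k(x\mp\tfrac h2)]\pm E\sin[k(x\mp \tfrac h2)], & h/4\le \pm x\le 3h/4,\\ B\cos[k(x\mp h)], & 3h/4\le \pm x\le h,\end{cases}$$ with $\phi,\phi'$ continuous and $2h$-periodic. Then $$\cos\frac{kh}{2}\,\sin\frac{kh}{4}\left[\Big(\frac{1-7r^2/48}{1-r^2/48}\Big)\frac{4}{kh}\sin\frac{kh}{4}+\Big(\frac{k^2h^2}{\mu}-1\Big)\cos\frac{kh}{4}\right]=0 .$$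
   Context: Homogeneous controlled patch problem (governing perturbations about an equilibrium). A field $T(x,t)$, $2h$-periodic in $x$, satisfies $T_t=KT_{xx}+\frac{K\mu}{h^2}g(x,T)$, where $g$ is piecewise constant: on the right action region $h/4<x<3h/4$, $g=T_{\mathrm{int}}-\frac2h\int_{h/4}^{3h/4}T\,dx$; on the left action region $-3h/4<x<-h/4$, $g=T_{\mathrm{int}}-\frac2h\int_{-3h/4}^{-h/4}T\,dx$; and $g=0$ on the core $|x|<h/4$ and buffer $3h/4<|x|\le h$. Here $T_c=\frac2h\int_{-h/4}^{h/4}T\,dx$ is the core average and, with $r=h/H$, $$T_{\mathrm{int}}=T_c\,\frac{1-13r^2/48}{1-r^2/48}$$ (this is the action-region average of the parabolic interpolant through zero boundary values at $x=\pm H$ with core average $T_c$). Solutions are understood piecewise, with $T,T_x$ continuous across region boundaries. *)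

theory Defs
  imports "HOL-Analysis.Analysis"
begin

text \<open>Action-region average of the parabolic interpolant: T_int = T_c * factor(r), r = h/H.\<close>
definition Tint_factor :: "real \<Rightarrow> real" where
  "Tint_factor r = (1 - 13 * r^2 / 48) / (1 - r^2 / 48)"

definition core_avg :: "real \<Rightarrow> (real \<Rightarrow> real \<Rightarrow> real) \<Rightarrow> real \<Rightarrow> real" where
  "core_avg h T t = (2 / h) * integral {-h/4..h/4} (\<lambda>y. T y t)"

definition patch_g :: "real \<Rightarrow> real \<Rightarrow> (real \<Rightarrow> real \<Rightarrow> real) \<Rightarrow> real \<Rightarrow> real \<Rightarrow> real" where
  "patch_g h H T x t =
     (let Tint = core_avg h T t * Tint_factor (h / H) in
      if h/4 < x \<and> x < 3*h/4 then Tint - (2 / h) * integral {h/4..3*h/4} (\<lambda>y. T y t)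
      else if -3*h/4 < x \<and> x < -h/4 then Tint - (2 / h) * integral {-3*h/4..-h/4} (\<lambda>y. T y t)
      else 0)"

text \<open>T solves T_t = K T_xx + (K mu / h^2) g(x,T) piecewise, i.e. at every time t and every
  point x of (-h,h] lying in the interior of a region (core, action regions, buffers;
  x = h is interior to the buffer by 2h-periodicity).\<close>
definition solves_patch ::
  "real \<Rightarrow> real \<Rightarrow> real \<Rightarrow> real \<Rightarrow> (real \<Rightarrow> real \<Rightarrow> real) \<Rightarrow> bool" where
  "solves_patch K \<mu> h H T \<longleftrightarrow>
     (\<forall>t x. (\<bar>x\<bar> < h/4 \<or> (h/4 < \<bar>x\<bar> \<and> \<bar>x\<bar> < 3*h/4) \<or> (3*h/4 < \<bar>x\<bar> \<and> \<bar>x\<bar> \<le> h)) \<longrightarrow>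
        deriv (\<lambda>s. T x s) t =
          K * deriv (\<lambda>y. deriv (\<lambda>z. T z t) y) x + K * \<mu> / h^2 * patch_g h H T x t)"

end

theory Submission
  imports Defs "HOL-Library.Periodic_Fun"
begin

text \<open>Continuity of \<open>\<phi>\<close> and \<open>\<phi>'\<close> at the junctions \<open>x = h/4\<close> and \<open>x = 3h/4\<close> gives four
  linear equations for the coefficients. Unless \<open>cos (kh/2) sin (kh/4) = 0\<close> they force
  \<open>E = 0\<close>, \<open>B = A\<close>, \<open>D = -A\<close>, \<open>C = 2A cos (kh/4)\<close>, and \<open>A \<noteq> 0\<close> because \<open>\<phi> \<noteq> 0\<close>.
  The equation at \<open>x = h/2\<close>, \<open>t = 0\<close> balances the decay \<open>-k\<^sup>2 C\<close> of the constant part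
  against the control, i.e.\ the difference of the core and action-region averages;
  substituting the coefficients and dividing by \<open>A\<close> leaves the claimed relation, because
  \<open>(1 - 7r\<^sup>2/48)/(1 - r\<^sup>2/48)\<close> is the mean of \<open>1\<close> and the interpolation factor.\<close>

lemma eq_on_Icc_if_eq_on_Ioo:
  fixes f g :: "real \<Rightarrow> 'b::real_normed_vector"
  assumes "a < b" "continuous_on {a..b} f" "continuous_on {a..b} g"
    and "\<And>x. a < x \<Longrightarrow> x < b \<Longrightarrow> f x = g x" and "a \<le> x" "x \<le> b"
  shows "f x = g x"
proof -
  have "(\<lambda>x. f x - g x) x = 0"
    by (rule continuous_constant_on_closure[where S = "{a<..<b}"])
      (use assms in \<open>auto intro!: continuous_intros\<close>)
  then show ?thesis by simp
qed

lemma deriv_eq_if_eq_on_open: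
  assumes "open S" "x \<in> S" "\<And>y. y \<in> S \<Longrightarrow> f y = g y" "(g has_field_derivative D) (at x)"
  shows "deriv f x = D"
proof -
  have "deriv f x = deriv g x"
    by (rule deriv_cong_ev) (use assms in \<open>auto simp: eventually_nhds\<close>)
  then show ?thesis using assms(4) DERIV_imp_deriv by simp
qed

lemma integral_eq_antiderivative_diff:
  fixes F f :: "real \<Rightarrow> real"
  assumes "a \<le> b" "\<And>x. a \<le> x \<Longrightarrow> x \<le> b \<Longrightarrow> (F has_real_derivative f x) (at x)"
  shows "integral {a..b} f = F b - F a"
  by (rule integral_unique, rule fundamental_theorem_of_calculus)
    (use assms in \<open>auto simp: has_real_derivative_iff_has_vector_derivative
                          intro: has_vector_derivative_at_within\<close>)

lemma periodic_zero_if_zero_on_period: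
  fixes f :: "real \<Rightarrow> 'b::zero"
  assumes "p > 0" "\<And>x. f (x + p) = f x" "\<And>y. a \<le> y \<Longrightarrow> y \<le> a + p \<Longrightarrow> f y = 0"
  shows "f x = 0"
proof -
  interpret periodic_fun_simple f p by standard (rule assms(2))
  define n where "n = \<lfloor>(x - a) / p\<rfloor>"
  have "of_int n \<le> (x - a) / p" "(x - a) / p < of_int n + 1"
    unfolding n_def by linarith+
  then have "a \<le> x - of_int n * p" "x - of_int n * p \<le> a + p"
    using assms(1) by (simp_all add: field_simps)
  then show ?thesis using assms(3) minus_of_int[of x n] by simp
qed

lemma junction_conditions_solution:
  fixes A B C D E c s :: real
  assumes "c^2 - s^2 \<noteq> 0" "s \<noteq> 0"
    and "A * c = C + D * c - E * s" "- A * s = D * s + E * c"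
    and "B * c = C + D * c + E * s" "- D * s + E * c = B * s"
  shows "E = 0 \<and> B = A \<and> D = - A \<and> C = 2 * A * c"
proof -
  have AB: "(A - B) * c = -2 * E * s" "(A - B) * s = -2 * E * c"
    using assms(3-6) by (simp_all add: algebra_simps)
  have "-2 * E * (c^2 - s^2) = ((A - B) * s) * c - ((A - B) * c) * s"
    unfolding AB by (simp add: power2_eq_square algebra_simps)
  then have E: "E = 0"
    using assms(1) by simp
  then have "B = A"
    using AB(2) assms(2) by simp
  moreover have "(D + A) * s = 0"
    using assms(4) E by (simp add: algebra_simps)
  then have "D = - A"
    using assms(2) by (simp add: eq_neg_iff_add_eq_0)
  ultimately show ?thesis
    using assms(3) E by simp
qed

lemma Tint_factor_mean:
  "r^2 \<noteq> 48 \<Longrightarrow> (1 + Tint_factor r) / 2 = (1 - 7 * r^2 / 48) / (1 - r^2 / 48)"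
  unfolding Tint_factor_def by (simp add: field_simps)

locale even_patch_mode =
  fixes h k A B C D E :: real and \<phi> :: "real \<Rightarrow> real"
  assumes h_pos: "h > 0" and k_pos: "k > 0"
    and differentiable: "\<And>x. \<phi> differentiable (at x)"
    and deriv_continuous: "continuous_on UNIV (deriv \<phi>)"
    and periodic: "\<And>x. \<phi> (x + 2*h) = \<phi> x"
    and even: "\<And>x. \<phi> (-x) = \<phi> x"
    and nonzero: "\<exists>x. \<phi> x \<noteq> 0"
    and core: "\<And>x. \<bar>x\<bar> < h/4 \<Longrightarrow> \<phi> x = A * cos (k * x)"
    and action: "\<And>x. h/4 \<le> x \<Longrightarrow> x \<le> 3*h/4 \<Longrightarrow>
                  \<phi> x = C + D * cos (k * (x - h/2)) + E * sin (k * (x - h/2))"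
    and buffer: "\<And>x. 3*h/4 \<le> x \<Longrightarrow> x \<le> h \<Longrightarrow> \<phi> x = B * cos (k * (x - h))"
begin

lemma continuous_on_phi: "continuous_on S \<phi>"
  using differentiable differentiable_imp_continuous_within continuous_at_imp_continuous_on by blast

lemma continuous_on_deriv_phi: "continuous_on S (deriv \<phi>)"
  using deriv_continuous continuous_on_subset by blast

lemma core_on_closed: "-h/4 \<le> x \<Longrightarrow> x \<le> h/4 \<Longrightarrow> \<phi> x = A * cos (k * x)"
  by (rule eq_on_Icc_if_eq_on_Ioo[of "-h/4" "h/4"])
    (use h_pos core continuous_on_phi in \<open>auto intro!: continuous_intros\<close>)

lemma deriv_core: "-h/4 \<le> x \<Longrightarrow> x \<le> h/4 \<Longrightarrow> deriv \<phi> x = - A * k * sin (k * x)"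
proof (rule eq_on_Icc_if_eq_on_Ioo[of "-h/4" "h/4" "deriv \<phi>" "\<lambda>x. - A * k * sin (k * x)"])
  fix y assume "-h/4 < y" "y < h/4"
  then show "deriv \<phi> y = - A * k * sin (k * y)"
    by (intro deriv_eq_if_eq_on_open[of "{-h/4<..<h/4}" _ _ "\<lambda>x. A * cos (k * x)"])
      (auto intro!: core derivative_eq_intros)
qed (use h_pos continuous_on_deriv_phi in \<open>auto intro!: continuous_intros\<close>)

lemma deriv_action_open:
  "h/4 < x \<Longrightarrow> x < 3*h/4 \<Longrightarrow>
     deriv \<phi> x = - D * k * sin (k * (x - h/2)) + E * k * cos (k * (x - h/2))"
  by (intro deriv_eq_if_eq_on_open[of "{h/4<..<3*h/4}" _ _
        "\<lambda>x. C + D * cos (k * (x - h/2)) + E * sin (k * (x - h/2))"])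
    (auto intro!: action derivative_eq_intros)

lemma deriv_action:
  "h/4 \<le> x \<Longrightarrow> x \<le> 3*h/4 \<Longrightarrow>
     deriv \<phi> x = - D * k * sin (k * (x - h/2)) + E * k * cos (k * (x - h/2))"
  by (rule eq_on_Icc_if_eq_on_Ioo[of "h/4" "3*h/4" "deriv \<phi>"
        "\<lambda>x. - D * k * sin (k * (x - h/2)) + E * k * cos (k * (x - h/2))"])
    (use h_pos deriv_action_open continuous_on_deriv_phi
      in \<open>auto intro!: continuous_intros\<close>)

lemma deriv_buffer: "3*h/4 \<le> x \<Longrightarrow> x \<le> h \<Longrightarrow> deriv \<phi> x = - B * k * sin (k * (x - h))"
proof (rule eq_on_Icc_if_eq_on_Ioo[of "3*h/4" h "deriv \<phi>" "\<lambda>x. - B * k * sin (k * (x - h))"])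
  fix y assume "3*h/4 < y" "y < h"
  then show "deriv \<phi> y = - B * k * sin (k * (y - h))"
    by (intro deriv_eq_if_eq_on_open[of "{3*h/4<..<h}" _ _ "\<lambda>x. B * cos (k * (x - h))"])
      (auto intro!: buffer derivative_eq_intros)
qed (use h_pos continuous_on_deriv_phi in \<open>auto intro!: continuous_intros\<close>)

lemma junction_equations:
  defines "c \<equiv> cos (k*h/4)" and "s \<equiv> sin (k*h/4)"
  shows "A * c = C + D * c - E * s" and "- A * s = D * s + E * c"
    and "B * c = C + D * c + E * s" and "- D * s + E * c = B * s"
proof -
  have angles: "k * (h/4) = k*h/4" "k * (h/4 - h/2) = - (k*h/4)"
    "k * (3*h/4 - h/2) = k*h/4" "k * (3*h/4 - h) = - (k*h/4)"
    by (simp_all add: field_simps)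
  show "A * c = C + D * c - E * s"
    using core_on_closed[of "h/4"] action[of "h/4"] h_pos
    unfolding angles c_def s_def sin_minus cos_minus by simp
  show "B * c = C + D * c + E * s"
    using action[of "3*h/4"] buffer[of "3*h/4"] h_pos
    unfolding angles c_def s_def sin_minus cos_minus by simp
  have "k * (- A * s) = k * (D * s + E * c)"
    using deriv_core[of "h/4"] deriv_action[of "h/4"] h_pos
    unfolding angles c_def s_def sin_minus cos_minus by (simp add: algebra_simps)
  then show "- A * s = D * s + E * c"
    using k_pos by (simp only: mult_left_cancel)
  have "k * (- D * s + E * c) = k * (B * s)"
    using deriv_action[of "3*h/4"] deriv_buffer[of "3*h/4"] h_pos
    unfolding angles c_def s_def sin_minus cos_minus by (simp add: algebra_simps)
  then show "- D * s + E * c = B * s"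
    using k_pos by (simp only: mult_left_cancel)
qed

lemma integral_core: "integral {-h/4..h/4} \<phi> = 2 * A * sin (k*h/4) / k"
proof -
  have "integral {-h/4..h/4} \<phi> = integral {-h/4..h/4} (\<lambda>x. A * cos (k * x))"
    by (rule integral_cong) (simp add: core_on_closed)
  also have "\<dots> = A * sin (k * (h/4)) / k - A * sin (k * (-h/4)) / k"
    by (rule integral_eq_antiderivative_diff)
      (use h_pos k_pos in \<open>auto intro!: derivative_eq_intros\<close>)
  finally show ?thesis
    by (simp add: field_simps)
qed

lemma integral_action: "integral {h/4..3*h/4} \<phi> = C * h/2 + 2 * D * sin (k*h/4) / k"
proof -
  let ?F = "\<lambda>x. C * x + D * sin (k * (x - h/2)) / k - E * cos (k * (x - h/2)) / k"
  have angles: "k * (3*h/4 - h/2) = k*h/4" "k * (h/4 - h/2) = - (k*h/4)"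
    by (simp_all add: field_simps)
  have "integral {h/4..3*h/4} \<phi> =
      integral {h/4..3*h/4} (\<lambda>x. C + D * cos (k * (x - h/2)) + E * sin (k * (x - h/2)))"
    by (rule integral_cong) (simp add: action)
  also have "\<dots> = ?F (3*h/4) - ?F (h/4)"
    by (rule integral_eq_antiderivative_diff)
      (use h_pos k_pos in \<open>auto intro!: derivative_eq_intros\<close>)
  also have "\<dots> = C * h/2 + 2 * D * sin (k*h/4) / k"
    unfolding angles sin_minus cos_minus using k_pos by (simp add: field_simps)
  finally show ?thesis .
qed

lemma deriv2_midpoint: "deriv (deriv \<phi>) (h/2) = - D * k^2"
  by (rule deriv_eq_if_eq_on_open[of "{h/4<..<3*h/4}" _ _
        "\<lambda>x. - D * k * sin (k * (x - h/2)) + E * k * cos (k * (x - h/2))"])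
    (use h_pos deriv_action_open in \<open>auto intro!: derivative_eq_intros simp: power2_eq_square\<close>)

lemma coefficients_if_nondegenerate:
  assumes "cos (k*h/2) \<noteq> 0" "sin (k*h/4) \<noteq> 0"
  shows "E = 0 \<and> B = A \<and> D = - A \<and> C = 2 * A * cos (k*h/4)"
proof (rule junction_conditions_solution[OF _ assms(2) junction_equations])
  have "cos (k*h/2) = cos (2 * (k*h/4))"
    by (rule arg_cong[where f = cos]) simp
  then show "(cos (k*h/4))^2 - (sin (k*h/4))^2 \<noteq> 0"
    using assms(1) by (metis cos_double)
qed

lemma amplitude_nonzero:
  assumes "cos (k*h/2) \<noteq> 0" "sin (k*h/4) \<noteq> 0"
  shows "A \<noteq> 0"
proof
  assume "A = 0"
  with coefficients_if_nondegenerate[OF assms]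
  have "\<phi> x = 0" if "0 \<le> x" "x \<le> h" for x
    using core[of x] action[of x] buffer[of x] that by fastforce
  then have "\<phi> x = 0" if "-h \<le> x" "x \<le> -h + 2*h" for x
    using that even[of x] by (cases "x \<ge> 0") auto
  then have "\<phi> x = 0" for x
    by (rule periodic_zero_if_zero_on_period[of "2*h" \<phi> "-h", rotated 2])
      (use periodic h_pos in auto)
  with nonzero show False
    by simp
qed

lemma midpoint_balance:
  assumes "K > 0" "\<mu> > 0"
    and sol: "solves_patch K \<mu> h H (\<lambda>x t. exp (- K * k^2 * t) * \<phi> x)"
  defines "w \<equiv> 4 * sin (k*h/4) / (k*h)"
  shows "k^2 * h^2 / \<mu> * C = C + D * w - Tint_factor (h/H) * A * w"
proof -
  let ?T = "\<lambda>x t. exp (- K * k^2 * t) * \<phi> x"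
  have "h/4 < \<bar>h/2\<bar> \<and> \<bar>h/2\<bar> < 3*h/4"
    using h_pos by simp
  then have pde: "deriv (\<lambda>t. ?T (h/2) t) 0 =
      K * deriv (\<lambda>y. deriv (\<lambda>z. ?T z 0) y) (h/2) + K * \<mu> / h^2 * patch_g h H ?T (h/2) 0"
    using sol unfolding solves_patch_def by blast
  have "((\<lambda>t. ?T (h/2) t) has_real_derivative - K * k^2 * \<phi> (h/2)) (at 0)"
    by (auto intro!: derivative_eq_intros)
  then have time_deriv: "deriv (\<lambda>t. ?T (h/2) t) 0 = - K * k^2 * (C + D)"
    using action[of "h/2"] h_pos by (simp add: DERIV_imp_deriv)
  have space_deriv: "deriv (\<lambda>y. deriv (\<lambda>z. ?T z 0) y) (h/2) = - D * k^2"
    using deriv2_midpoint by simp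
  have "(\<lambda>y. ?T y 0) = \<phi>"
    by simp
  then have "patch_g h H ?T (h/2) 0 =
      (2/h) * integral {-h/4..h/4} \<phi> * Tint_factor (h/H) - (2/h) * integral {h/4..3*h/4} \<phi>"
    unfolding patch_g_def core_avg_def Let_def using h_pos by simp
  also have "\<dots> = Tint_factor (h/H) * A * w - (C + D * w)"
    unfolding integral_core integral_action w_def using h_pos k_pos by (simp add: field_simps)
  finally have control: "patch_g h H ?T (h/2) 0 = Tint_factor (h/H) * A * w - (C + D * w)" .
  have "K * (k^2 * C) = K * (\<mu> / h^2 * (C + D * w - Tint_factor (h/H) * A * w))"
    using pde unfolding time_deriv space_deriv control by (simp add: algebra_simps)
  then have "k^2 * C = \<mu> / h^2 * (C + D * w - Tint_factor (h/H) * A * w)"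
    by (metis assms(1) mult_left_cancel order_less_irrefl)
  then show ?thesis
    using assms(2) h_pos by (simp add: field_simps)
qed

lemma dispersion_relation:
  assumes "K > 0" "\<mu> > 0"
    and sol: "solves_patch K \<mu> h H (\<lambda>x t. exp (- K * k^2 * t) * \<phi> x)"
  shows "cos (k*h/2) * sin (k*h/4) *
           ((1 + Tint_factor (h/H)) / 2 * (4 / (k*h)) * sin (k*h/4)
            + (k^2 * h^2 / \<mu> - 1) * cos (k*h/4)) = 0"
proof (cases "cos (k*h/2) = 0 \<or> sin (k*h/4) = 0")
  case False
  let ?c = "cos (k*h/4)" and ?s = "sin (k*h/4)" and ?w = "4 * sin (k*h/4) / (k*h)"
  have "A * ((1 + Tint_factor (h/H)) * ?w + 2 * (k^2 * h^2 / \<mu> - 1) * ?c) = 0"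
    using midpoint_balance[OF assms] coefficients_if_nondegenerate False
    by (simp add: algebra_simps add_divide_distrib)
  then have "(1 + Tint_factor (h/H)) * ?w + 2 * (k^2 * h^2 / \<mu> - 1) * ?c = 0"
    using amplitude_nonzero False by simp
  then have "(1 + Tint_factor (h/H)) / 2 * (4 / (k*h)) * ?s + (k^2 * h^2 / \<mu> - 1) * ?c = 0"
    using assms(2) h_pos k_pos by (simp add: field_simps)
  then show ?thesis
    by simp
qed auto

end

theorem mainTheorem2:
  fixes K \<mu> h H k A B C D E :: real and \<phi> :: "real \<Rightarrow> real"
  assumes "K > 0" and "\<mu> > 0" and "h > 0"
    and "0 < h / H" and "h / H < 1"
    and "k > 0"
    and phi_diff: "\<forall>x. \<phi> differentiable (at x)"
    and phi'_cont: "continuous_on UNIV (deriv \<phi>)"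
    and periodic: "\<forall>x. \<phi> (x + 2*h) = \<phi> x"
    and even: "\<forall>x. \<phi> (-x) = \<phi> x"
    and nonzero: "\<exists>x. \<phi> x \<noteq> 0"
    and core: "\<forall>x. \<bar>x\<bar> < h/4 \<longrightarrow> \<phi> x = A * cos (k * x)"
    and act_r: "\<forall>x. h/4 \<le> x \<and> x \<le> 3*h/4 \<longrightarrow>
                  \<phi> x = C + D * cos (k * (x - h/2)) + E * sin (k * (x - h/2))"
    and act_l: "\<forall>x. h/4 \<le> -x \<and> -x \<le> 3*h/4 \<longrightarrow>
                  \<phi> x = C + D * cos (k * (x + h/2)) - E * sin (k * (x + h/2))"
    and buf_r: "\<forall>x. 3*h/4 \<le> x \<and> x \<le> h \<longrightarrow> \<phi> x = B * cos (k * (x - h))"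
    and buf_l: "\<forall>x. 3*h/4 \<le> -x \<and> -x \<le> h \<longrightarrow> \<phi> x = B * cos (k * (x + h))"
    and sol: "solves_patch K \<mu> h H (\<lambda>x t. exp (- K * k^2 * t) * \<phi> x)"
  shows "cos (k*h/2) * sin (k*h/4) *
           (((1 - 7 * (h/H)^2 / 48) / (1 - (h/H)^2 / 48)) * (4 / (k*h)) * sin (k*h/4)
            + ((k^2 * h^2) / \<mu> - 1) * cos (k*h/4)) = 0"
proof -
  interpret even_patch_mode h k A B C D E \<phi>
    using assms by unfold_locales auto
  have "(h/H)^2 < 1"
    using assms(4,5) by (simp add: power_less_one_iff)
  then have "(1 - 7 * (h/H)^2 / 48) / (1 - (h/H)^2 / 48) = (1 + Tint_factor (h/H)) / 2"
    by (intro Tint_factor_mean[symmetric]) simp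
  then show ?thesis
    using dispersion_relation[OF assms(1,2) sol] by (simp only:)
qed

end
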